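(* Let $K_1,\ldots,K_d\subset\mathbb C$ be compact sets and $f:K_1\times\cdots\times K_d\to\mathbb C$. The following are equivalent: (a) $f\in A_D(K_1\times\cdots\times K_d)$; (b) $f$ is continuous on $K_1\times\cdots\times K_d$, and for each $i_0\in\{1,\ldots,d\}$ and each choice of points $w_i\in K_i$ for $i\neq i_0$ (points of the boundary $\partial K_i$ allowed), the function $z\mapsto f(z_1(z),\ldots,z_d(z))$, where $z_{i_0}(z)=z$ and $z_i(z)=w_i$ for $i\ne i_0$, is holomorphic on the interior $K_{i_0}^\circ$.
   Context: For a compact set $K\subset\mathbb C^d$, $A_D(K)$ is the set of continuous functions $f:K\to\mathbb C$ such that for every open disc $D\subset\mathbb C$ and every injective holomorphic mapping $\phi:D\to\mathbb C^d$ with $\phi(D)\subset K$ (holomorphic meaning each coordinate is holomorphic), the composition $f\circ\phi:D\to\mathbb C$ is holomorphic. *)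

theory Defs
  imports "HOL-Complex_Analysis.Complex_Analysis"
begin

text \<open>Points of C^d are vectors \<open>complex ^ 'n\<close> with d = CARD('n).\<close>

definition prod_set :: "('n::finite \<Rightarrow> complex set) \<Rightarrow> (complex ^ 'n) set" where
  "prod_set K = {z. \<forall>i. z $ i \<in> K i}"

definition A_D :: "(complex ^ 'n::finite) set \<Rightarrow> (complex ^ 'n \<Rightarrow> complex) \<Rightarrow> bool" where
  "A_D K f \<longleftrightarrow> continuous_on K f \<and>
     (\<forall>c r (\<phi> :: complex \<Rightarrow> complex ^ 'n).
        r > 0 \<and> inj_on \<phi> (ball c r) \<and> (\<forall>i. (\<lambda>z. \<phi> z $ i) holomorphic_on ball c r)
        \<and> \<phi> ` ball c r \<subseteq> K
        \<longrightarrow> (f \<circ> \<phi>) holomorphic_on ball c r)"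

end

theory Submission
  imports Defs
begin

text \<open>A slice \<open>z \<mapsto> (w\<^sub>1, \<dots>, z, \<dots>, w\<^sub>d)\<close> is itself an injective holomorphic disc, which gives
  (a) \<open>\<Longrightarrow>\<close> (b). Conversely, let \<open>f\<close> be continuous and holomorphic in each variable. By the Cauchy
  estimates and the uniform continuity of \<open>f\<close> on the compact product, the partial derivative
  \<open>\<partial>f/\<partial>z\<^sub>k\<close> is continuous at every point whose \<open>k\<close>-th coordinate is interior to \<open>K\<^sub>k\<close>. For a
  holomorphic disc \<open>\<phi>\<close> in the product, replace the coordinates of \<open>\<phi>(t\<^sub>0)\<close> by those of \<open>\<phi>(t)\<close> one
  at a time: by the mean value inequality each step contributes \<open>\<phi>\<^sub>k'(t\<^sub>0) \<partial>f/\<partial>z\<^sub>k(\<phi>(t\<^sub>0))\<close> to the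
  derivative of \<open>f \<circ> \<phi>\<close>. The points of \<open>\<partial>K\<^sub>k\<close> cause no trouble: by the open mapping theorem
  \<open>\<phi>\<^sub>k\<close> is either constant, and then the step contributes nothing, or maps the disc into the
  interior of \<open>K\<^sub>k\<close>.\<close>

definition upd_coord :: "complex ^ 'n::finite \<Rightarrow> 'n \<Rightarrow> complex \<Rightarrow> complex ^ 'n" where
  "upd_coord z k \<zeta> = (\<chi> i. if i = k then \<zeta> else z $ i)"

definition mix_coords :: "'n::finite set \<Rightarrow> complex ^ 'n \<Rightarrow> complex ^ 'n \<Rightarrow> complex ^ 'n" where
  "mix_coords J z w = (\<chi> i. if i \<in> J then z $ i else w $ i)"

definition partial_deriv :: "(complex ^ 'n::finite \<Rightarrow> complex) \<Rightarrow> 'n \<Rightarrow> complex ^ 'n \<Rightarrow> complex" where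
  "partial_deriv f k z = deriv (\<lambda>\<zeta>. f (upd_coord z k \<zeta>)) (z $ k)"

definition separately_holomorphic :: "('n::finite \<Rightarrow> complex set) \<Rightarrow> (complex ^ 'n \<Rightarrow> complex) \<Rightarrow> bool" where
  "separately_holomorphic K f \<longleftrightarrow>
     (\<forall>k z. (\<forall>i. i \<noteq> k \<longrightarrow> z $ i \<in> K i) \<longrightarrow> (\<lambda>\<zeta>. f (upd_coord z k \<zeta>)) holomorphic_on interior (K k))"

subsection \<open>Coordinates\<close>

lemma upd_coord_nth [simp]: "upd_coord z k \<zeta> $ i = (if i = k then \<zeta> else z $ i)"
  by (simp add: upd_coord_def)

lemma upd_coord_upd_coord [simp]: "upd_coord (upd_coord z k a) k b = upd_coord z k b"
  by (simp add: vec_eq_iff)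

lemma upd_coord_nth_self [simp]: "upd_coord z k (z $ k) = z"
  by (simp add: vec_eq_iff)

lemma upd_coord_in_prod_set: "z \<in> prod_set K \<Longrightarrow> \<zeta> \<in> K k \<Longrightarrow> upd_coord z k \<zeta> \<in> prod_set K"
  by (simp add: prod_set_def)

lemma dist_upd_coord_le: "dist (upd_coord z k \<zeta>) (upd_coord w k \<zeta>) \<le> dist z w"
  unfolding dist_norm by (rule norm_le_componentwise_cart) auto

lemma dist_upd_coord_upd_coord: "dist (upd_coord z k a) (upd_coord z k b) = dist a b"
proof -
  have "(\<lambda>i. (dist (upd_coord z k a $ i) (upd_coord z k b $ i))\<^sup>2) = (\<lambda>i. if i = k then (dist a b)\<^sup>2 else 0)"
    by (auto simp: upd_coord_def)
  then show ?thesis by (simp only: dist_vec_def L2_set_def) simp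
qed

lemma dist_upd_coord_triangle: "dist (upd_coord z k \<zeta>) w \<le> dist z w + dist \<zeta> (w $ k)"
proof -
  have "dist (upd_coord z k \<zeta>) w \<le> dist (upd_coord z k \<zeta>) (upd_coord w k \<zeta>) + dist (upd_coord w k \<zeta>) w"
    by (rule dist_triangle)
  also have "dist (upd_coord w k \<zeta>) w = dist \<zeta> (w $ k)"
    using dist_upd_coord_upd_coord[of w k \<zeta> "w $ k"] by simp
  finally show ?thesis using dist_upd_coord_le[of z k \<zeta> w] by linarith
qed

lemma mix_coords_empty [simp]: "mix_coords {} z w = w"
  by (simp add: mix_coords_def vec_eq_iff)

lemma mix_coords_UNIV [simp]: "mix_coords UNIV z w = z"
  by (simp add: mix_coords_def vec_eq_iff)

lemma mix_coords_insert: "mix_coords (insert k J) z w = upd_coord (mix_coords J z w) k (z $ k)"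
  by (simp add: mix_coords_def vec_eq_iff)

lemma mix_coords_notin: "k \<notin> J \<Longrightarrow> mix_coords J z w = upd_coord (mix_coords J z w) k (w $ k)"
  by (simp add: mix_coords_def vec_eq_iff)

lemma mix_coords_in_prod_set: "z \<in> prod_set K \<Longrightarrow> w \<in> prod_set K \<Longrightarrow> mix_coords J z w \<in> prod_set K"
  by (simp add: mix_coords_def prod_set_def)

lemma compact_prod_set:
  assumes "\<And>i. compact (K i)"
  shows "compact (prod_set K)"
proof -
  have "\<forall>i. \<exists>b. \<forall>x\<in>K i. norm x \<le> b"
    using assms compact_imp_bounded bounded_iff by metis
  then obtain B where B: "\<And>i x. x \<in> K i \<Longrightarrow> norm x \<le> B i" by metis
  have "bounded (prod_set K)"
    unfolding bounded_iff
  proof (intro exI ballI)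
    fix z assume "z \<in> prod_set K"
    then have "norm (z $ i) \<le> B i" for i by (auto simp: prod_set_def B)
    then have "(\<Sum>i\<in>UNIV. norm (z $ i)) \<le> (\<Sum>i\<in>UNIV. B i)" by (rule sum_mono)
    moreover have "norm z \<le> (\<Sum>i\<in>UNIV. norm (z $ i))"
      by (simp add: norm_vec_def L2_set_le_sum)
    ultimately show "norm z \<le> (\<Sum>i\<in>UNIV. B i)" by linarith
  qed
  moreover have "closed (prod_set K)"
    unfolding prod_set_def by (intro closed_vector_box allI compact_imp_closed assms)
  ultimately show ?thesis by (simp add: compact_eq_bounded_closed)
qed

lemma separately_holomorphicD:
  "separately_holomorphic K f \<Longrightarrow> z \<in> prod_set K \<Longrightarrow>
     (\<lambda>\<zeta>. f (upd_coord z k \<zeta>)) holomorphic_on interior (K k)"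
  by (simp add: separately_holomorphic_def prod_set_def)

subsection \<open>One complex variable\<close>

lemma norm_deriv_diff_le:
  fixes g h :: "complex \<Rightarrow> complex"
  assumes "g holomorphic_on S" "h holomorphic_on S" "open S" "cball a r \<subseteq> S" "r > 0"
    and bound: "\<And>x. norm (a - x) = r \<Longrightarrow> norm (g x - h x) \<le> B"
  shows "norm (deriv g a - deriv h a) \<le> B / r"
proof -
  have hol: "(\<lambda>x. g x - h x) holomorphic_on S"
    using assms by (intro holomorphic_intros)
  have "norm ((deriv ^^ 1) (\<lambda>x. g x - h x) a) \<le> fact 1 * B / r ^ 1"
  proof (rule Cauchy_inequality)
    show "(\<lambda>x. g x - h x) holomorphic_on ball a r"
      using hol assms(4) ball_subset_cball holomorphic_on_subset by blast
    show "continuous_on (cball a r) (\<lambda>x. g x - h x)"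
      using hol assms(4) holomorphic_on_imp_continuous_on continuous_on_subset by blast
  qed (use assms in auto)
  moreover have "a \<in> S" using assms(4,5) by auto
  then have "deriv (\<lambda>x. g x - h x) a = deriv g a - deriv h a"
    using assms(1-3) by (intro deriv_diff holomorphic_on_imp_differentiable_at)
  ultimately show ?thesis by simp
qed

lemma holomorphic_increment_bound:
  fixes g :: "complex \<Rightarrow> complex"
  assumes "g holomorphic_on S" "open S" "closed_segment a b \<subseteq> S"
    and bound: "\<And>\<zeta>. \<zeta> \<in> closed_segment a b \<Longrightarrow> norm (deriv g \<zeta> - c) \<le> \<epsilon>"
  shows "norm (g b - g a - (b - a) * c) \<le> \<epsilon> * norm (b - a)"
proof -
  have "norm ((g b - b * c) - (g a - a * c)) \<le> \<epsilon> * norm (b - a)"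
  proof (rule field_differentiable_bound[where f' = "\<lambda>\<zeta>. deriv g \<zeta> - c"])
    fix \<zeta> assume \<zeta>: "\<zeta> \<in> closed_segment a b"
    then have "\<zeta> \<in> S" using assms(3) by blast
    then show "((\<lambda>\<xi>. g \<xi> - \<xi> * c) has_field_derivative deriv g \<zeta> - c) (at \<zeta> within closed_segment a b)"
      using holomorphic_derivI[OF assms(1,2)] by (auto intro!: derivative_eq_intros)
  qed (use bound in auto)
  then show ?thesis by (simp add: algebra_simps)
qed

lemma holomorphic_constant_or_image_in_interior:
  assumes "g holomorphic_on S" "open S" "connected S" "g ` S \<subseteq> T"
  shows "g constant_on S \<or> g ` S \<subseteq> interior T"
  using open_mapping_thm[OF assms(1-3) assms(2) order_refl] assms(4) interior_maximal by blast

subsection \<open>Continuity of the partial derivatives\<close>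

lemma norm_slice_deriv_diff_le:
  fixes f :: "complex ^ 'n::finite \<Rightarrow> complex"
  assumes sep: "separately_holomorphic K f" and "z \<in> prod_set K" "w \<in> prod_set K"
    and "cball a r \<subseteq> interior (K k)" "r > 0"
    and close: "\<And>\<zeta>. \<zeta> \<in> K k \<Longrightarrow> norm (f (upd_coord z k \<zeta>) - f (upd_coord w k \<zeta>)) \<le> B"
  shows "norm (deriv (\<lambda>\<zeta>. f (upd_coord z k \<zeta>)) a - deriv (\<lambda>\<zeta>. f (upd_coord w k \<zeta>)) a) \<le> B / r"
proof (rule norm_deriv_diff_le[OF _ _ open_interior assms(4,5)])
  show "(\<lambda>\<zeta>. f (upd_coord z k \<zeta>)) holomorphic_on interior (K k)"
       "(\<lambda>\<zeta>. f (upd_coord w k \<zeta>)) holomorphic_on interior (K k)"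
    using separately_holomorphicD[OF sep] assms(2,3) by blast+
  fix x assume "norm (a - x) = r"
  then have "x \<in> cball a r" by (simp add: dist_norm)
  then show "norm (f (upd_coord z k x) - f (upd_coord w k x)) \<le> B"
    using assms(4) interior_subset close by blast
qed

lemma continuous_partial_deriv:
  fixes f :: "complex ^ 'n::finite \<Rightarrow> complex" and z0 :: "complex ^ 'n"
  assumes cont: "continuous_on (prod_set K) f" and comp: "compact (prod_set K)"
    and sep: "separately_holomorphic K f"
    and z0: "z0 \<in> prod_set K" "z0 $ k \<in> interior (K k)"
  shows "continuous (at z0 within prod_set K) (partial_deriv f k)"
  unfolding continuous_within_eps_delta
proof (intro allI impI)
  fix e :: real assume e: "e > 0"
  obtain R where R: "R > 0" "ball (z0 $ k) R \<subseteq> interior (K k)"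
    using z0(2) open_contains_ball open_interior by blast
  define r where "r = R / 2"
  have r: "r > 0" using R by (simp add: r_def)
  obtain \<eta> where \<eta>: "\<eta> > 0"
    "\<And>x y. x \<in> prod_set K \<Longrightarrow> y \<in> prod_set K \<Longrightarrow> dist y x < \<eta> \<Longrightarrow> dist (f y) (f x) < e * r / 2"
    using compact_uniformly_continuous[OF cont comp] e r
    unfolding uniformly_continuous_on_def by (metis divide_pos_pos mult_pos_pos zero_less_numeral)
  define g0 where "g0 = (\<lambda>\<zeta>. f (upd_coord z0 k \<zeta>))"
  have "g0 holomorphic_on interior (K k)"
    using separately_holomorphicD[OF sep z0(1)] by (simp add: g0_def)
  then have "continuous (at (z0 $ k)) (deriv g0)"
    using z0(2) holomorphic_deriv holomorphic_on_imp_continuous_on continuous_on_eq_continuous_at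
      open_interior by metis
  then obtain \<delta> where \<delta>: "\<delta> > 0" "\<And>y. dist y (z0 $ k) < \<delta> \<Longrightarrow> dist (deriv g0 y) (deriv g0 (z0 $ k)) < e / 2"
    using e unfolding continuous_at_eps_delta by (metis half_gt_zero)
  show "\<exists>d>0. \<forall>z\<in>prod_set K. dist z z0 < d \<longrightarrow> dist (partial_deriv f k z) (partial_deriv f k z0) < e"
  proof (intro exI[of _ "min r (min \<eta> \<delta>)"] conjI ballI impI)
    show "min r (min \<eta> \<delta>) > 0" using r \<eta> \<delta> by simp
    fix z assume z: "z \<in> prod_set K" "dist z z0 < min r (min \<eta> \<delta>)"
    have zk: "dist (z $ k) (z0 $ k) < min r (min \<eta> \<delta>)"
      using z(2) dist_vec_nth_le le_less_trans by blast
    define g where "g = (\<lambda>\<zeta>. f (upd_coord z k \<zeta>))"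
    have sub: "cball (z $ k) r \<subseteq> interior (K k)"
    proof
      fix x assume "x \<in> cball (z $ k) r"
      then have "dist (z0 $ k) x < R"
        using zk dist_triangle[of "z0 $ k" x "z $ k"] by (simp add: r_def dist_commute)
      then show "x \<in> interior (K k)" using R by auto
    qed
    have "norm (deriv g (z $ k) - deriv g0 (z $ k)) \<le> (e * r / 2) / r"
      unfolding g_def g0_def
    proof (rule norm_slice_deriv_diff_le[OF sep z(1) z0(1) sub r])
      fix x assume "x \<in> K k"
      moreover have "dist (upd_coord z k x) (upd_coord z0 k x) < \<eta>"
        using dist_upd_coord_le[of z k x z0] z(2) by linarith
      ultimately show "norm (f (upd_coord z k x) - f (upd_coord z0 k x)) \<le> e * r / 2"
        using \<eta>(2) upd_coord_in_prod_set[OF z(1)] upd_coord_in_prod_set[OF z0(1)]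
        by (fastforce simp: dist_norm)
    qed
    moreover have "norm (deriv g0 (z $ k) - deriv g0 (z0 $ k)) < e / 2"
      using \<delta>(2)[of "z $ k"] zk by (simp add: dist_norm)
    moreover have "partial_deriv f k z = deriv g (z $ k)" "partial_deriv f k z0 = deriv g0 (z0 $ k)"
      by (simp_all add: partial_deriv_def g_def g0_def)
    ultimately show "dist (partial_deriv f k z) (partial_deriv f k z0) < e"
      using r norm_triangle_ineq[of "deriv g (z $ k) - deriv g0 (z $ k)" "deriv g0 (z $ k) - deriv g0 (z0 $ k)"]
      by (simp add: dist_norm)
  qed
qed

subsection \<open>The chain rule\<close>

lemma partial_increment_bound:
  fixes f :: "complex ^ 'n::finite \<Rightarrow> complex" and y :: "complex ^ 'n"
  assumes sep: "separately_holomorphic K f" and "y \<in> prod_set K"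
    and "closed_segment a b \<subseteq> interior (K k)"
    and "\<And>\<zeta>. \<zeta> \<in> closed_segment a b \<Longrightarrow> norm (partial_deriv f k (upd_coord y k \<zeta>) - c) \<le> \<epsilon>"
  shows "norm (f (upd_coord y k b) - f (upd_coord y k a) - (b - a) * c) \<le> \<epsilon> * norm (b - a)"
  using holomorphic_increment_bound[OF separately_holomorphicD[OF sep assms(2)] open_interior assms(3)] assms(4)
  by (simp add: partial_deriv_def)

lemma partial_increment_eventually_small:
  fixes f :: "complex ^ 'n::finite \<Rightarrow> complex" and z0 :: "complex ^ 'n"
    and q :: "'a \<Rightarrow> complex ^ 'n"
  assumes cont: "continuous_on (prod_set K) f" and comp: "compact (prod_set K)"
    and sep: "separately_holomorphic K f"
    and z0: "z0 \<in> prod_set K" "z0 $ k \<in> interior (K k)"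
    and q: "(q \<longlongrightarrow> z0) F" "eventually (\<lambda>t. q t \<in> prod_set K) F"
    and h: "(h \<longlongrightarrow> z0 $ k) F" and \<epsilon>: "\<epsilon> > 0"
  shows "eventually (\<lambda>t. norm (f (upd_coord (q t) k (h t)) - f (upd_coord (q t) k (z0 $ k))
           - (h t - z0 $ k) * partial_deriv f k z0) \<le> \<epsilon> * norm (h t - z0 $ k)) F"
proof -
  obtain \<delta> where \<delta>: "\<delta> > 0"
    "\<And>z. z \<in> prod_set K \<Longrightarrow> dist z z0 < \<delta> \<Longrightarrow> dist (partial_deriv f k z) (partial_deriv f k z0) < \<epsilon>"
    using continuous_partial_deriv[OF cont comp sep z0] \<epsilon>
    unfolding continuous_within_eps_delta by blast
  obtain \<rho> where \<rho>: "\<rho> > 0" "ball (z0 $ k) \<rho> \<subseteq> interior (K k)"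
    using z0(2) open_contains_ball open_interior by blast
  define \<eta> where "\<eta> = min \<delta> \<rho> / 2"
  have \<eta>: "\<eta> > 0" "2 * \<eta> \<le> \<delta>" "\<eta> \<le> \<rho>" using \<delta> \<rho> by (simp_all add: \<eta>_def)
  have "eventually (\<lambda>t. dist (h t) (z0 $ k) < \<eta>) F"
    using h \<eta>(1) by (rule tendstoD)
  moreover have "eventually (\<lambda>t. dist (q t) z0 < \<eta>) F"
    using q(1) \<eta>(1) by (rule tendstoD)
  ultimately show ?thesis
    using q(2)
  proof eventually_elim
    case (elim t)
    have near: "dist \<zeta> (z0 $ k) < \<eta>" if "\<zeta> \<in> closed_segment (z0 $ k) (h t)" for \<zeta>
    proof -
      have "dist \<zeta> (z0 $ k) \<le> dist (z0 $ k) (h t)" using dist_in_closed_segment[OF that] by simp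
      also have "\<dots> < \<eta>" using elim(1) by (simp add: dist_commute)
      finally show ?thesis .
    qed
    have "\<zeta> \<in> interior (K k)" if "\<zeta> \<in> closed_segment (z0 $ k) (h t)" for \<zeta>
    proof -
      have "\<zeta> \<in> ball (z0 $ k) \<rho>" using near[OF that] \<eta>(3) by (simp add: dist_commute)
      then show ?thesis using \<rho>(2) by blast
    qed
    then have seg: "closed_segment (z0 $ k) (h t) \<subseteq> interior (K k)" by blast
    show ?case
    proof (rule partial_increment_bound[OF sep elim(3) seg])
      fix \<zeta> assume \<zeta>: "\<zeta> \<in> closed_segment (z0 $ k) (h t)"
      then have "upd_coord (q t) k \<zeta> \<in> prod_set K"
        using seg interior_subset upd_coord_in_prod_set[OF elim(3)] by blast
      moreover have "dist (upd_coord (q t) k \<zeta>) z0 < \<delta>"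
        using dist_upd_coord_triangle[of "q t" k \<zeta> z0] elim(2) near[OF \<zeta>] \<eta>(2) by simp
      ultimately have "dist (partial_deriv f k (upd_coord (q t) k \<zeta>)) (partial_deriv f k z0) < \<epsilon>"
        by (rule \<delta>(2))
      then show "norm (partial_deriv f k (upd_coord (q t) k \<zeta>) - partial_deriv f k z0) \<le> \<epsilon>"
        by (simp add: dist_norm)
    qed
  qed
qed

lemma partial_difference_quotient_tendsto:
  fixes f :: "complex ^ 'n::finite \<Rightarrow> complex" and z0 :: "complex ^ 'n"
    and q :: "complex \<Rightarrow> complex ^ 'n"
  assumes cont: "continuous_on (prod_set K) f" and comp: "compact (prod_set K)"
    and sep: "separately_holomorphic K f"
    and z0: "z0 \<in> prod_set K" "z0 $ k \<in> interior (K k)"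
    and q: "(q \<longlongrightarrow> z0) (at t0)" "eventually (\<lambda>t. q t \<in> prod_set K) (at t0)"
    and h: "(h has_field_derivative d) (at t0)" "h t0 = z0 $ k"
  shows "((\<lambda>t. (f (upd_coord (q t) k (h t)) - f (upd_coord (q t) k (z0 $ k))) / (t - t0))
           \<longlongrightarrow> d * partial_deriv f k z0) (at t0)"
proof -
  define c where "c = partial_deriv f k z0"
  define Q where "Q t = (h t - h t0) / (t - t0)" for t
  define E where "E t = (f (upd_coord (q t) k (h t)) - f (upd_coord (q t) k (z0 $ k))) / (t - t0) - Q t * c" for t
  have Q: "(Q \<longlongrightarrow> d) (at t0)"
    using h(1) unfolding Q_def has_field_derivative_iff .
  have h_lim: "(h \<longlongrightarrow> z0 $ k) (at t0)"
    using DERIV_isCont[OF h(1)] h(2) by (simp add: isCont_def)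
  have "(E \<longlongrightarrow> 0) (at t0)"
  proof (rule tendstoI)
    fix \<epsilon> :: real assume \<epsilon>: "\<epsilon> > 0"
    define M where "M = norm d + 1"
    have M: "M > 0" by (simp add: M_def add_nonneg_pos)
    define \<epsilon>1 where "\<epsilon>1 = \<epsilon> / (2 * M)"
    have \<epsilon>1: "\<epsilon>1 > 0" "\<epsilon>1 * M < \<epsilon>" using \<epsilon> M by (simp_all add: \<epsilon>1_def)
    have "eventually (\<lambda>t. dist (Q t) d < 1) (at t0)"
      using Q by (rule tendstoD) simp
    with partial_increment_eventually_small[OF cont comp sep z0 q h_lim \<epsilon>1(1)]
    show "eventually (\<lambda>t. dist (E t) 0 < \<epsilon>) (at t0)"
    proof eventually_elim
      case (elim t)
      have "E t = (f (upd_coord (q t) k (h t)) - f (upd_coord (q t) k (z0 $ k)) - (h t - z0 $ k) * c) / (t - t0)"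
        by (simp add: E_def Q_def h(2) diff_divide_distrib[symmetric] times_divide_eq_left)
      then have "norm (E t) \<le> \<epsilon>1 * norm (h t - z0 $ k) / norm (t - t0)"
        using elim(1) by (simp add: norm_divide c_def divide_right_mono)
      also have "\<dots> = \<epsilon>1 * norm (Q t)"
        by (simp add: Q_def h(2) norm_divide)
      also have "\<dots> \<le> \<epsilon>1 * M"
        using elim(2) norm_triangle_ineq2[of "Q t" d] \<epsilon>1(1) by (simp add: M_def dist_norm)
      finally show ?case using \<epsilon>1(2) by simp
    qed
  qed
  then have "((\<lambda>t. E t + Q t * c) \<longlongrightarrow> 0 + d * c) (at t0)"
    by (intro tendsto_intros Q)
  then show ?thesis by (simp add: E_def c_def)
qed

lemma coordinate_step_tendsto:
  fixes f :: "complex ^ 'n::finite \<Rightarrow> complex" and \<phi> :: "complex \<Rightarrow> complex ^ 'n"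
  assumes cont: "continuous_on (prod_set K) f" and comp: "compact (prod_set K)"
    and sep: "separately_holomorphic K f"
    and hol: "\<And>i. (\<lambda>t. \<phi> t $ i) holomorphic_on S" and S: "open S" "connected S"
    and img: "\<phi> ` S \<subseteq> prod_set K" and t0: "t0 \<in> S" and k: "k \<notin> J"
  shows "((\<lambda>t. (f (mix_coords (insert k J) (\<phi> t) (\<phi> t0)) - f (mix_coords J (\<phi> t) (\<phi> t0))) / (t - t0))
           \<longlongrightarrow> deriv (\<lambda>t. \<phi> t $ k) t0 * partial_deriv f k (\<phi> t0)) (at t0)"
proof -
  define q where "q t = mix_coords J (\<phi> t) (\<phi> t0)" for t
  define Q where "Q t = (\<phi> t $ k - \<phi> t0 $ k) / (t - t0)" for t
  have quotient: "(f (mix_coords (insert k J) (\<phi> t) (\<phi> t0)) - f (mix_coords J (\<phi> t) (\<phi> t0))) / (t - t0)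
      = (f (upd_coord (q t) k (\<phi> t $ k)) - f (upd_coord (q t) k (\<phi> t0 $ k))) / (t - t0)" for t
    using mix_coords_notin[OF k] by (simp add: q_def mix_coords_insert)
  have deriv_k: "((\<lambda>t. \<phi> t $ k) has_field_derivative deriv (\<lambda>t. \<phi> t $ k) t0) (at t0)"
    using holomorphic_derivI[OF hol S(1) t0] .
  have in_S: "eventually (\<lambda>t. t \<in> S) (at t0)"
    using S(1) t0 by (rule eventually_at_in_open')
  have "(\<lambda>t. \<phi> t $ k) ` S \<subseteq> K k"
    using img by (auto simp: prod_set_def)
  then consider "(\<lambda>t. \<phi> t $ k) constant_on S" | "(\<lambda>t. \<phi> t $ k) ` S \<subseteq> interior (K k)"
    using holomorphic_constant_or_image_in_interior[OF hol S] by blast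
  then show ?thesis
  proof cases
    case 1
    have const: "\<phi> t $ k = \<phi> t0 $ k" if "t \<in> S" for t
      using 1 t0 that by (auto simp: constant_on_def)
    have "(Q \<longlongrightarrow> deriv (\<lambda>t. \<phi> t $ k) t0) (at t0)"
      using deriv_k unfolding Q_def has_field_derivative_iff .
    moreover have "eventually (\<lambda>t. Q t * partial_deriv f k (\<phi> t0) =
        (f (upd_coord (q t) k (\<phi> t $ k)) - f (upd_coord (q t) k (\<phi> t0 $ k))) / (t - t0)) (at t0)"
      using in_S by (rule eventually_mono) (simp add: Q_def const)
    ultimately show ?thesis
      unfolding quotient by (rule Lim_transform_eventually[OF tendsto_mult_right])
  next
    case 2
    have coord_lim: "((\<lambda>t. \<phi> t $ i) \<longlongrightarrow> \<phi> t0 $ i) (at t0)" for i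
      using hol S(1) t0 holomorphic_on_imp_continuous_on continuous_on_eq_continuous_at
      unfolding isCont_def by blast
    show ?thesis
      unfolding quotient
    proof (rule partial_difference_quotient_tendsto[OF cont comp sep])
      show "\<phi> t0 \<in> prod_set K" "\<phi> t0 $ k \<in> interior (K k)" using img 2 t0 by auto
      show "(q \<longlongrightarrow> \<phi> t0) (at t0)"
      proof (rule vec_tendstoI)
        show "((\<lambda>t. q t $ i) \<longlongrightarrow> \<phi> t0 $ i) (at t0)" for i
          by (cases "i \<in> J") (simp_all add: q_def mix_coords_def coord_lim)
      qed
      show "eventually (\<lambda>t. q t \<in> prod_set K) (at t0)"
        using in_S by (rule eventually_mono) (use img t0 in \<open>auto simp: q_def intro!: mix_coords_in_prod_set\<close>)
    qed (use deriv_k in auto)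
  qed
qed

lemma separately_holomorphic_chain_rule:
  fixes f :: "complex ^ 'n::finite \<Rightarrow> complex" and \<phi> :: "complex \<Rightarrow> complex ^ 'n"
  assumes cont: "continuous_on (prod_set K) f" and comp: "compact (prod_set K)"
    and sep: "separately_holomorphic K f"
    and hol: "\<And>i. (\<lambda>t. \<phi> t $ i) holomorphic_on S" and S: "open S" "connected S"
    and img: "\<phi> ` S \<subseteq> prod_set K" and t0: "t0 \<in> S"
  shows "((f \<circ> \<phi>) has_field_derivative (\<Sum>k\<in>UNIV. deriv (\<lambda>t. \<phi> t $ k) t0 * partial_deriv f k (\<phi> t0))) (at t0)"
proof -
  have "((\<lambda>t. (f (mix_coords J (\<phi> t) (\<phi> t0)) - f (\<phi> t0)) / (t - t0))
          \<longlongrightarrow> (\<Sum>k\<in>J. deriv (\<lambda>t. \<phi> t $ k) t0 * partial_deriv f k (\<phi> t0))) (at t0)" for J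
    using finite[of J]
  proof (induction J rule: finite_induct)
    case empty
    then show ?case by simp
  next
    case (insert k J)
    have split: "(f (mix_coords (insert k J) (\<phi> t) (\<phi> t0)) - f (\<phi> t0)) / (t - t0)
        = (f (mix_coords (insert k J) (\<phi> t) (\<phi> t0)) - f (mix_coords J (\<phi> t) (\<phi> t0))) / (t - t0)
          + (f (mix_coords J (\<phi> t) (\<phi> t0)) - f (\<phi> t0)) / (t - t0)" for t
      by (simp add: add_divide_distrib[symmetric])
    show ?case
      unfolding split sum.insert[OF insert(1,2)]
      by (rule tendsto_add[OF coordinate_step_tendsto[OF cont comp sep hol S img t0 insert(2)] insert(3)])
  qed
  from this[of UNIV] show ?thesis
    by (simp add: has_field_derivative_iff o_def)
qed

subsection \<open>The class \<open>A_D\<close> of a product\<close>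

lemma A_D_imp_separately_holomorphic:
  fixes K :: "'n::finite \<Rightarrow> complex set" and f :: "complex ^ 'n \<Rightarrow> complex"
  assumes "A_D (prod_set K) f"
  shows "separately_holomorphic K f"
  unfolding separately_holomorphic_def
proof (intro allI impI)
  fix k and w :: "complex ^ 'n" assume w: "\<forall>i. i \<noteq> k \<longrightarrow> w $ i \<in> K i"
  have disc: "(f \<circ> \<phi>) holomorphic_on ball c r"
    if "r > 0" "inj_on \<phi> (ball c r)" "\<And>i. (\<lambda>z. \<phi> z $ i) holomorphic_on ball c r"
       "\<phi> ` ball c r \<subseteq> prod_set K" for c r and \<phi> :: "complex \<Rightarrow> complex ^ 'n"
    using assms that unfolding A_D_def by blast
  show "(\<lambda>\<zeta>. f (upd_coord w k \<zeta>)) holomorphic_on interior (K k)"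
    unfolding holomorphic_on_open[OF open_interior]
  proof
    fix x assume "x \<in> interior (K k)"
    then obtain e where e: "e > 0" "ball x e \<subseteq> interior (K k)"
      using open_contains_ball open_interior by blast
    have "inj_on (upd_coord w k) (ball x e)"
    proof (rule inj_onI)
      fix a b assume "upd_coord w k a = upd_coord w k b"
      then have "upd_coord w k a $ k = upd_coord w k b $ k" by (rule arg_cong)
      then show "a = b" by simp
    qed
    moreover have "(\<lambda>\<zeta>. upd_coord w k \<zeta> $ i) holomorphic_on ball x e" for i
      by (cases "i = k") simp_all
    moreover have "ball x e \<subseteq> K k"
      using e(2) interior_subset by blast
    then have "upd_coord w k ` ball x e \<subseteq> prod_set K"
      using w by (auto simp: prod_set_def)
    ultimately have "(f \<circ> upd_coord w k) holomorphic_on ball x e"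
      by (rule disc[OF e(1)])
    then have "(f \<circ> upd_coord w k) field_differentiable (at x)"
      using e(1) holomorphic_on_imp_differentiable_at by (meson centre_in_ball open_ball)
    then show "\<exists>f'. ((\<lambda>\<zeta>. f (upd_coord w k \<zeta>)) has_field_derivative f') (at x)"
      by (simp add: field_differentiable_def o_def)
  qed
qed

lemma A_D_prod_setI:
  fixes K :: "'n::finite \<Rightarrow> complex set" and f :: "complex ^ 'n \<Rightarrow> complex"
  assumes "compact (prod_set K)" "continuous_on (prod_set K) f" "separately_holomorphic K f"
  shows "A_D (prod_set K) f"
  unfolding A_D_def
proof (intro conjI allI impI assms(2))
  fix c r and \<phi> :: "complex \<Rightarrow> complex ^ 'n"
  assume "0 < r \<and> inj_on \<phi> (ball c r) \<and> (\<forall>i. (\<lambda>z. \<phi> z $ i) holomorphic_on ball c r) \<and>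
    \<phi> ` ball c r \<subseteq> prod_set K"
  then have hol: "\<And>i. (\<lambda>z. \<phi> z $ i) holomorphic_on ball c r" and img: "\<phi> ` ball c r \<subseteq> prod_set K"
    by auto
  have "\<exists>f'. ((f \<circ> \<phi>) has_field_derivative f') (at t)" if "t \<in> ball c r" for t
    using separately_holomorphic_chain_rule[OF assms(2,1,3) hol open_ball connected_ball img that] ..
  then show "(f \<circ> \<phi>) holomorphic_on ball c r"
    unfolding holomorphic_on_open[OF open_ball] by blast
qed

theorem mainTheorem9:
  fixes K :: "'n::finite \<Rightarrow> complex set" and f :: "complex ^ 'n \<Rightarrow> complex"
  assumes "\<And>i. compact (K i)"
  shows "A_D (prod_set K) f \<longleftrightarrow>
    (continuous_on (prod_set K) f \<and>
     (\<forall>i0 (w :: complex ^ 'n). (\<forall>i. i \<noteq> i0 \<longrightarrow> w $ i \<in> K i) \<longrightarrow>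
        (\<lambda>z. f (\<chi> i. if i = i0 then z else w $ i)) holomorphic_on interior (K i0)))"
proof -
  have slices: "(\<forall>i0 (w :: complex ^ 'n). (\<forall>i. i \<noteq> i0 \<longrightarrow> w $ i \<in> K i) \<longrightarrow>
        (\<lambda>z. f (\<chi> i. if i = i0 then z else w $ i)) holomorphic_on interior (K i0))
      \<longleftrightarrow> separately_holomorphic K f"
    unfolding separately_holomorphic_def upd_coord_def ..
  have comp: "compact (prod_set K)"
    using assms by (rule compact_prod_set)
  show ?thesis
    unfolding slices
  proof
    assume A: "A_D (prod_set K) f"
    then have "continuous_on (prod_set K) f"
      unfolding A_D_def by (rule conjunct1)
    with A show "continuous_on (prod_set K) f \<and> separately_holomorphic K f"
      using A_D_imp_separately_holomorphic by blast
  next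
    assume "continuous_on (prod_set K) f \<and> separately_holomorphic K f"
    then show "A_D (prod_set K) f"
      using A_D_prod_setI[OF comp] by blast
  qed
qed

end
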